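(* Let $\beta>0$, $c\ge0$, $a=\sqrt{\tfrac{\beta}{2}}\sqrt{1+\tfrac{2c}{\beta}-\sqrt{1+\tfrac{4c}{\beta}}}$, $b=\sqrt{\tfrac{\beta}{2}}\sqrt{1+\tfrac{2c}{\beta}+\sqrt{1+\tfrac{4c}{\beta}}}$, $S=[-b,-a]\cup[a,b]$, and let $\nu_{\beta,c}$ be the probability measure with density $\frac{2}{\pi\beta}\frac{1}{|t|}\sqrt{(t^2-a^2)(b^2-t^2)}$ on $S$ and $0$ off $S$. Let $f(z)=\frac{2}{\beta z}\sqrt{z-a}\sqrt{z-b}\sqrt{z+a}\sqrt{z+b}$ with principal-branch square roots, defined on $\mathbb{C}\setminus(-\infty,b]$. Then $f$ continues holomorphically to $\mathbb{C}\setminus(S\cup\{0\})$, and the Cauchy transform $G(z)=\int_{\mathbb{R}}\frac{1}{z-t}\,\nu_{\beta,c}(dt)$ satisfies, for all $z\in\mathbb{C}\setminus(S\cup\{0\})$, $$G(z)=-f(z)+\frac{2}{\beta}z-\frac{2c}{\beta z}.$$ *)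

theory Defs
  imports "HOL-Complex_Analysis.Complex_Analysis"
begin

definition edge_a :: "real \<Rightarrow> real \<Rightarrow> real" where
  "edge_a \<beta> c = sqrt (\<beta>/2) * sqrt (1 + 2*c/\<beta> - sqrt (1 + 4*c/\<beta>))"

definition edge_b :: "real \<Rightarrow> real \<Rightarrow> real" where
  "edge_b \<beta> c = sqrt (\<beta>/2) * sqrt (1 + 2*c/\<beta> + sqrt (1 + 4*c/\<beta>))"

definition supp_S :: "real \<Rightarrow> real \<Rightarrow> real set" where
  "supp_S \<beta> c = {-edge_b \<beta> c .. -edge_a \<beta> c} \<union> {edge_a \<beta> c .. edge_b \<beta> c}"

definition nu_dens :: "real \<Rightarrow> real \<Rightarrow> real \<Rightarrow> real" where
  "nu_dens \<beta> c t =
     (if t \<in> supp_S \<beta> c then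
        2 / (pi * \<beta>) * (1 / \<bar>t\<bar>) *
          sqrt ((t^2 - (edge_a \<beta> c)^2) * ((edge_b \<beta> c)^2 - t^2))
      else 0)"

definition nu :: "real \<Rightarrow> real \<Rightarrow> real measure" where
  "nu \<beta> c = density lborel (\<lambda>t. ennreal (nu_dens \<beta> c t))"

definition cauchy_G :: "real \<Rightarrow> real \<Rightarrow> complex \<Rightarrow> complex" where
  "cauchy_G \<beta> c z = (\<integral>t. 1 / (z - complex_of_real t) \<partial>(nu \<beta> c))"

definition f_branch :: "real \<Rightarrow> real \<Rightarrow> complex \<Rightarrow> complex" where
  "f_branch \<beta> c z =
     2 / (complex_of_real \<beta> * z) *
       csqrt (z - of_real (edge_a \<beta> c)) * csqrt (z - of_real (edge_b \<beta> c)) *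
       csqrt (z + of_real (edge_a \<beta> c)) * csqrt (z + of_real (edge_b \<beta> c))"

end

theory Submission
  imports Defs
begin

(*
  For real x > b the Cauchy transform can be computed in closed form. Folding the even density
  onto [a, b] and substituting u = t^2 leaves the integral of sqrt((u - A)(B - u)) / (u (W - u))
  over [A, B], with A = a^2, B = b^2, W = x^2. The partial fraction decomposition
    (u - A)(B - u) / (u (W - u)) = 1 - AB / (W u) - (W - A)(W - B) / (W (W - u))
  gives an antiderivative built from three arcsines, and evaluating it yields
  G(x) = 2x/beta - 2c/(beta x) - f(x), using ab = c. Both sides are holomorphic on the slit plane
  C - (-inf, b], which is connected, so the identity theorem extends the equation there.
  The continuation of f is 2z/beta - 2c/(beta z) - G(z), holomorphic off S u {0} because G is
  a Cauchy integral of a continuous density.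
*)

lemma DERIV_arcsin_comp:
  fixes h :: "real \<Rightarrow> real"
  assumes h: "(h has_real_derivative h') (at u)"
    and pos: "0 < 1 - h u" "0 < 1 + h u"
    and r: "(1 - h u) * (1 + h u) = r^2" "0 < r"
  shows "((\<lambda>u. arcsin (h u)) has_real_derivative h' / r) (at u)"
proof -
  have "1 - (h u)^2 = r^2"
    using r(1) by (simp add: power2_eq_square algebra_simps)
  then have "sqrt (1 - (h u)^2) = r"
    using r(2) by simp
  with pos show ?thesis
    using DERIV_chain2[OF DERIV_arcsin h] by (simp add: divide_inverse mult.commute)
qed

definition affine_to_unit :: "real \<Rightarrow> real \<Rightarrow> real \<Rightarrow> real" where
  "affine_to_unit A B u = (2 * u - A - B) / (B - A)"

definition moebius_to_unit :: "real \<Rightarrow> real \<Rightarrow> real \<Rightarrow> real" where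
  "moebius_to_unit P R y = ((P + R) * y - 2 * P * R) / (y * (R - P))"

lemma affine_to_unit_bounds:
  assumes "A \<le> u" "u \<le> B" "A < B"
  shows "affine_to_unit A B u \<in> {-1..1}"
  using assms by (auto simp: affine_to_unit_def le_divide_eq divide_le_eq)

lemma affine_to_unit_endpoints:
  assumes "A < B"
  shows "affine_to_unit A B A = -1" "affine_to_unit A B B = 1"
  using assms by (auto simp: affine_to_unit_def divide_simps)

lemma moebius_to_unit_bounds:
  assumes "0 < P" "P \<le> y" "y \<le> R" "P < R"
  shows "moebius_to_unit P R y \<in> {-1..1}"
proof -
  have "0 < y * (R - P)" using assms by simp
  moreover have "- (y * (R - P)) \<le> (P + R) * y - 2 * P * R"
    using assms mult_nonneg_nonneg[of R "y - P"] by (simp add: algebra_simps)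
  moreover have "(P + R) * y - 2 * P * R \<le> y * (R - P)"
    using assms mult_nonneg_nonneg[of P "R - y"] by (simp add: algebra_simps)
  ultimately show ?thesis by (simp add: moebius_to_unit_def le_divide_eq divide_le_eq)
qed

lemma moebius_to_unit_endpoints:
  assumes "0 < P" "P < R"
  shows "moebius_to_unit P R P = -1" "moebius_to_unit P R R = 1"
  using assms by (auto simp: moebius_to_unit_def divide_simps algebra_simps)

lemma DERIV_arcsin_affine_to_unit:
  fixes A B u :: real
  assumes "A < u" "u < B"
  shows "((\<lambda>u. arcsin (affine_to_unit A B u)) has_real_derivative 1 / sqrt ((u - A) * (B - u))) (at u)"
proof -
  define q where "q = sqrt ((u - A) * (B - u))"
  define r where "r = 2 * q / (B - A)"
  have AB: "0 < B - A" and q: "0 < q" using assms by (auto simp: q_def)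
  have "(affine_to_unit A B has_real_derivative 2 / (B - A)) (at u)"
    unfolding affine_to_unit_def [abs_def] using AB
    by (auto intro!: derivative_eq_intros) (simp add: divide_simps)
  moreover have "1 - affine_to_unit A B u = 2 * (B - u) / (B - A)"
    and "1 + affine_to_unit A B u = 2 * (u - A) / (B - A)"
    using AB by (auto simp: affine_to_unit_def field_simps)
  moreover have "2 * (B - u) / (B - A) * (2 * (u - A) / (B - A)) = r^2"
  proof -
    have "r^2 = 4 * ((u - A) * (B - u)) / (B - A)^2"
      using assms by (simp add: r_def q_def power_divide power_mult_distrib)
    then show ?thesis using AB by (simp add: power2_eq_square field_simps)
  qed
  moreover have "0 < r" using AB q by (simp add: r_def)
  ultimately have "((\<lambda>u. arcsin (affine_to_unit A B u)) has_real_derivative 2 / (B - A) / r) (at u)"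
    using assms by (intro DERIV_arcsin_comp) auto
  moreover have "2 / (B - A) / r = 1 / q"
    using AB q by (simp add: r_def field_simps)
  ultimately show ?thesis by (simp add: q_def)
qed

lemma DERIV_moebius_to_unit:
  fixes P R y :: real
  assumes "0 < y" "0 < R - P"
  shows "(moebius_to_unit P R has_real_derivative 2 * P * R / (y^2 * (R - P))) (at y)"
proof -
  have "(moebius_to_unit P R has_real_derivative
      ((P + R) * (y * (R - P)) - ((P + R) * y - 2 * P * R) * (R - P)) / ((y * (R - P)) * (y * (R - P)))) (at y)"
    unfolding moebius_to_unit_def [abs_def] using assms by (auto intro!: derivative_eq_intros)
  moreover have "(P + R) * (y * (R - P)) - ((P + R) * y - 2 * P * R) * (R - P) = 2 * P * R * (R - P)"
    by (simp add: algebra_simps)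
  then have "((P + R) * (y * (R - P)) - ((P + R) * y - 2 * P * R) * (R - P)) / ((y * (R - P)) * (y * (R - P)))
      = 2 * P * R / (y^2 * (R - P))"
    using assms by (simp add: power2_eq_square)
  ultimately show ?thesis by simp
qed

lemma DERIV_arcsin_moebius_to_unit:
  fixes P R y :: real
  assumes "0 < P" "P < y" "y < R"
  shows "((\<lambda>y. arcsin (moebius_to_unit P R y)) has_real_derivative
           sqrt (P * R) / (y * sqrt ((y - P) * (R - y)))) (at y)"
proof -
  define s where "s = sqrt (P * R)"
  define q where "q = sqrt ((y - P) * (R - y))"
  define r where "r = 2 * s * q / (y * (R - P))"
  have pos: "0 < y" "0 < R - P" "0 < s" "0 < q" using assms by (auto simp: s_def q_def)
  have "(moebius_to_unit P R has_real_derivative 2 * P * R / (y^2 * (R - P))) (at y)"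
    by (rule DERIV_moebius_to_unit [OF pos(1,2)])
  moreover have "1 - moebius_to_unit P R y = 2 * P * (R - y) / (y * (R - P))"
    and "1 + moebius_to_unit P R y = 2 * R * (y - P) / (y * (R - P))"
    using pos by (auto simp: moebius_to_unit_def field_simps)
  moreover have "2 * P * (R - y) / (y * (R - P)) * (2 * R * (y - P) / (y * (R - P))) = r^2"
  proof -
    have "r^2 = 4 * (P * R) * ((y - P) * (R - y)) / (y * (R - P))^2"
      using assms by (simp add: r_def s_def q_def power_divide power_mult_distrib)
    then show ?thesis using pos by (simp add: power2_eq_square field_simps)
  qed
  moreover have "0 < r" using pos by (simp add: r_def)
  ultimately have "((\<lambda>y. arcsin (moebius_to_unit P R y)) has_real_derivative
      2 * P * R / (y^2 * (R - P)) / r) (at y)"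
    using assms by (intro DERIV_arcsin_comp) auto
  moreover have "2 * P * R / (y^2 * (R - P)) / r = s / (y * q)"
  proof -
    have PR: "2 * P * R = 2 * (s * s)" using assms by (simp add: s_def)
    show ?thesis unfolding PR using pos by (simp add: r_def field_simps power2_eq_square)
  qed
  ultimately show ?thesis by (simp add: s_def q_def)
qed

definition arcsin_antideriv :: "real \<Rightarrow> real \<Rightarrow> real \<Rightarrow> real \<Rightarrow> real" where
  "arcsin_antideriv A B W u =
     arcsin (affine_to_unit A B u) - sqrt (A * B) / W * arcsin (moebius_to_unit A B u)
     + sqrt ((W - A) * (W - B)) / W * arcsin (moebius_to_unit (W - B) (W - A) (W - u))"

lemma partial_fractions_sqrt_kernel:
  fixes q s s' u A B W :: real
  assumes q: "0 < q" "q * q = (u - A) * (B - u)"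
    and s: "s * s = A * B" "s' * s' = (W - A) * (W - B)"
    and nz: "u \<noteq> 0" "W \<noteq> 0" "W - u \<noteq> 0"
  shows "1 / q - s / W * (s / (u * q)) + s' / W * (- s' / ((W - u) * q)) = q / (u * (W - u))"
proof -
  have "1 / q - s / W * (s / (u * q)) + s' / W * (- s' / ((W - u) * q))
      = (1 - (s * s) / (W * u) - (s' * s') / (W * (W - u))) / q"
    using nz q(1) by (simp add: field_simps)
  also have "\<dots> = ((u - A) * (B - u) / (u * (W - u))) / q"
  proof -
    have "1 - A * B / (W * u) - (W - A) * (W - B) / (W * (W - u)) = (u - A) * (B - u) / (u * (W - u))"
      using nz by (simp add: field_simps)
    then show ?thesis unfolding s by simp
  qed
  also have "\<dots> = q / (u * (W - u))"
    unfolding q(2) [symmetric] using q(1) nz by (simp add: field_simps)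
  finally show ?thesis .
qed

lemma arcsin_antideriv_has_real_derivative:
  fixes A B W u :: real
  assumes "0 \<le> A" "A < u" "u < B" "B < W"
  shows "(arcsin_antideriv A B W has_real_derivative sqrt ((u - A) * (B - u)) / (u * (W - u))) (at u)"
proof -
  define q where "q = sqrt ((u - A) * (B - u))"
  define s where "s = sqrt (A * B)"
  define s' where "s' = sqrt ((W - A) * (W - B))"
  have q: "0 < q" "q * q = (u - A) * (B - u)" using assms by (auto simp: q_def)
  have s: "s * s = A * B" "s' * s' = (W - A) * (W - B)"
    using assms by (auto simp: s_def s'_def)
  have nz: "u \<noteq> 0" "W \<noteq> 0" "W - u \<noteq> 0" using assms by auto
  have d1: "((\<lambda>u. arcsin (affine_to_unit A B u)) has_real_derivative 1 / q) (at u)"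
    unfolding q_def using assms by (intro DERIV_arcsin_affine_to_unit) auto
  have d2: "((\<lambda>u. s / W * arcsin (moebius_to_unit A B u)) has_real_derivative s / W * (s / (u * q))) (at u)"
  proof (cases "A = 0")
    case False
    then have "((\<lambda>u. arcsin (moebius_to_unit A B u)) has_real_derivative s / (u * q)) (at u)"
      using DERIV_arcsin_moebius_to_unit[of A u B] assms by (simp add: s_def q_def)
    then show ?thesis by (rule DERIV_cmult)
  qed (simp add: s_def)
  have "((\<lambda>y. arcsin (moebius_to_unit (W - B) (W - A) y)) has_real_derivative s' / ((W - u) * q)) (at (W - u))"
    using DERIV_arcsin_moebius_to_unit[of "W - B" "W - u" "W - A"] assms
    by (simp add: s'_def q_def mult.commute)
  moreover have "((\<lambda>u. W - u) has_real_derivative -1) (at u)"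
    by (auto intro!: derivative_eq_intros)
  ultimately have "((\<lambda>u. arcsin (moebius_to_unit (W - B) (W - A) (W - u))) has_real_derivative
      - s' / ((W - u) * q)) (at u)"
    using DERIV_chain2[where f = "\<lambda>y. arcsin (moebius_to_unit (W - B) (W - A) y)" and g = "\<lambda>u. W - u"]
    by fastforce
  then have d3: "((\<lambda>u. s' / W * arcsin (moebius_to_unit (W - B) (W - A) (W - u))) has_real_derivative
      s' / W * (- s' / ((W - u) * q))) (at u)"
    by (rule DERIV_cmult)
  have "(arcsin_antideriv A B W has_real_derivative 1 / q - s / W * (s / (u * q)) + s' / W * (- s' / ((W - u) * q))) (at u)"
    unfolding arcsin_antideriv_def s_def [symmetric] s'_def [symmetric] by (intro DERIV_add DERIV_diff d1 d2 d3)
  moreover have "1 / q - s / W * (s / (u * q)) + s' / W * (- s' / ((W - u) * q)) = q / (u * (W - u))"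
    using q s nz by (rule partial_fractions_sqrt_kernel)
  ultimately show ?thesis by (simp add: q_def)
qed

lemma continuous_on_arcsin_antideriv:
  fixes A B W :: real
  assumes "0 \<le> A" "A < B" "B < W"
  shows "continuous_on {A..B} (arcsin_antideriv A B W)"
proof -
  have c1: "continuous_on {A..B} (\<lambda>u. arcsin (affine_to_unit A B u))"
  proof (rule continuous_on_arcsin)
    show "continuous_on {A..B} (affine_to_unit A B)"
      unfolding affine_to_unit_def [abs_def] using assms by (intro continuous_intros) auto
  qed (use affine_to_unit_bounds assms in auto)
  have c2: "continuous_on {A..B} (\<lambda>u. sqrt (A * B) / W * arcsin (moebius_to_unit A B u))"
  proof (cases "A = 0")
    case False
    then have "continuous_on {A..B} (\<lambda>u. arcsin (moebius_to_unit A B u))"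
    proof (intro continuous_on_arcsin)
      show "continuous_on {A..B} (moebius_to_unit A B)"
        unfolding moebius_to_unit_def [abs_def] using assms False by (intro continuous_intros) auto
    qed (use moebius_to_unit_bounds assms False in auto)
    then show ?thesis by (rule continuous_on_mult_left)
  qed simp
  have c3: "continuous_on {A..B} (\<lambda>u. arcsin (moebius_to_unit (W - B) (W - A) (W - u)))"
  proof (intro continuous_on_arcsin)
    show "continuous_on {A..B} (\<lambda>u. moebius_to_unit (W - B) (W - A) (W - u))"
      unfolding moebius_to_unit_def using assms by (intro continuous_intros) auto
  qed (use moebius_to_unit_bounds [of "W - B" "W - _" "W - A"] assms in auto)
  show ?thesis
    unfolding arcsin_antideriv_def [abs_def]
    by (rule continuous_on_add [OF continuous_on_diff [OF c1 c2] continuous_on_mult_left [OF c3]])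
qed

lemma arcsin_antideriv_increment:
  fixes A B W :: real
  assumes "0 \<le> A" "A < B" "B < W"
  shows "arcsin_antideriv A B W B - arcsin_antideriv A B W A
           = pi * (1 - sqrt (A * B) / W - sqrt ((W - A) * (W - B)) / W)"
proof -
  have "sqrt (A * B) * arcsin (moebius_to_unit A B B) - sqrt (A * B) * arcsin (moebius_to_unit A B A)
      = sqrt (A * B) * pi"
  proof (cases "A = 0")
    case False
    then show ?thesis using moebius_to_unit_endpoints [of A B] assms by (simp add: algebra_simps)
  qed simp
  moreover have "moebius_to_unit (W - B) (W - A) (W - B) = -1" "moebius_to_unit (W - B) (W - A) (W - A) = 1"
    using moebius_to_unit_endpoints [of "W - B" "W - A"] assms by auto
  ultimately show ?thesis
    using affine_to_unit_endpoints [of A B] assms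
    by (simp add: arcsin_antideriv_def field_simps)
qed

lemma sqrt_one_minus_div_square:
  fixes t A B :: real
  assumes "t \<noteq> 0"
  shows "sqrt ((1 - A / t^2) * (B - t^2)) = sqrt ((t^2 - A) * (B - t^2)) / \<bar>t\<bar>"
proof -
  have "(1 - A / t^2) * (B - t^2) = (t^2 - A) * (B - t^2) / \<bar>t\<bar>^2"
    using assms by (simp add: field_simps)
  then show ?thesis by (simp add: real_sqrt_divide)
qed

lemma DERIV_arcsin_antideriv_square:
  fixes a b x t :: real
  assumes a: "0 \<le> a" and t: "a < t" "t < b" and bx: "b < x"
  shows "((\<lambda>t. x * arcsin_antideriv (a^2) (b^2) (x^2) (t^2)) has_real_derivative
           sqrt ((1 - a^2 / t^2) * (b^2 - t^2)) * (2 * x / (x^2 - t^2))) (at t)"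
proof -
  define q where "q = sqrt ((t^2 - a^2) * (b^2 - t^2))"
  have t0: "0 < t" "a^2 < t^2" "t^2 < b^2" "b^2 < x^2"
    using assms by (auto intro: power_strict_mono)
  have "((\<lambda>t. arcsin_antideriv (a^2) (b^2) (x^2) (t^2)) has_real_derivative
      q / (t^2 * (x^2 - t^2)) * (2 * t)) (at t)"
    unfolding q_def
    by (rule DERIV_chain2 [OF arcsin_antideriv_has_real_derivative])
      (use t0 in \<open>auto intro!: derivative_eq_intros\<close>)
  then have "((\<lambda>t. x * arcsin_antideriv (a^2) (b^2) (x^2) (t^2)) has_real_derivative
      x * (q / (t^2 * (x^2 - t^2)) * (2 * t))) (at t)"
    by (rule DERIV_cmult)
  moreover have "x * (q / (t^2 * (x^2 - t^2)) * (2 * t)) = sqrt ((1 - a^2 / t^2) * (b^2 - t^2)) * (2 * x / (x^2 - t^2))"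
  proof -
    have "sqrt ((1 - a^2 / t^2) * (b^2 - t^2)) = q / t"
      using sqrt_one_minus_div_square [of t "a^2" "b^2"] t0 by (simp add: q_def)
    moreover have "x^2 - t^2 \<noteq> 0" using t0 by simp
    ultimately show ?thesis
      using t0 by (simp add: field_simps power2_eq_square)
  qed
  ultimately show ?thesis by simp
qed

lemma has_integral_folded_kernel:
  fixes a b x :: real
  assumes a: "0 \<le> a" and ab: "a < b" and bx: "b < x"
  shows "((\<lambda>t. sqrt ((1 - a^2 / t^2) * (b^2 - t^2)) * (2 * x / (x^2 - t^2))) has_integral
           x * pi * (1 - a * b / x^2 - sqrt ((x^2 - a^2) * (x^2 - b^2)) / x^2)) {a..b}"
proof -
  define F where "F t = x * arcsin_antideriv (a^2) (b^2) (x^2) (t^2)" for t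
  have AB: "0 \<le> a^2" "a^2 < b^2" "b^2 < x^2"
    using assms by (auto intro: power_strict_mono)
  have "continuous_on {a..b} F"
    unfolding F_def
  proof (intro continuous_on_mult_left continuous_on_compose2 [OF continuous_on_arcsin_antideriv [OF AB]])
    show "(\<lambda>t. t^2) ` {a..b} \<subseteq> {a^2..b^2}"
      using a by (auto intro: power_mono)
  qed (intro continuous_intros)
  moreover have "(F has_vector_derivative sqrt ((1 - a^2 / t^2) * (b^2 - t^2)) * (2 * x / (x^2 - t^2))) (at t)"
    if "t \<in> {a<..<b}" for t
    using DERIV_arcsin_antideriv_square [of a t b x] assms that
    by (simp add: F_def [abs_def] has_real_derivative_iff_has_vector_derivative)
  ultimately have "((\<lambda>t. sqrt ((1 - a^2 / t^2) * (b^2 - t^2)) * (2 * x / (x^2 - t^2))) has_integral F b - F a) {a..b}"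
    using ab by (intro fundamental_theorem_of_calculus_interior) auto
  moreover have "sqrt (a^2 * b^2) = a * b"
    using a ab by (simp add: real_sqrt_mult)
  then have "F b - F a = x * pi * (1 - a * b / x^2 - sqrt ((x^2 - a^2) * (x^2 - b^2)) / x^2)"
    using arcsin_antideriv_increment [OF AB] by (simp add: F_def right_diff_distrib [symmetric])
  ultimately show ?thesis by simp
qed

lemma cauchy_integral_has_field_derivative:
  fixes \<phi> :: "real \<Rightarrow> real" and p q r :: real and z0 :: complex
  assumes \<phi>: "continuous_on {p..q} \<phi>" and r: "0 < r"
    and nz: "\<And>z t. z \<in> ball z0 r \<Longrightarrow> t \<in> {p..q} \<Longrightarrow> z - of_real t \<noteq> 0"
  shows "((\<lambda>z. integral {p..q} (\<lambda>t. of_real (\<phi> t) / (z - of_real t))) has_field_derivative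
           integral {p..q} (\<lambda>t. - of_real (\<phi> t) / (z0 - of_real t)^2)) (at z0)"
proof -
  have "((\<lambda>z. integral (cbox p q) (\<lambda>t. of_real (\<phi> t) / (z - of_real t))) has_field_derivative
      integral (cbox p q) (\<lambda>t. - of_real (\<phi> t) / (z0 - of_real t)^2)) (at z0 within ball z0 r)"
  proof (rule leibniz_rule_field_derivative [where fx = "\<lambda>z t. - of_real (\<phi> t) / (z - of_real t)^2"])
    fix z t assume "z \<in> ball z0 r" "t \<in> cbox p q"
    then have "z - of_real t \<noteq> 0" using nz by auto
    then show "((\<lambda>z. of_real (\<phi> t) / (z - of_real t)) has_field_derivative
        - of_real (\<phi> t) / (z - of_real t)^2) (at z within ball z0 r)"
      by (auto intro!: derivative_eq_intros simp: power2_eq_square)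
  next
    fix z assume "z \<in> ball z0 r"
    with nz have "continuous_on {p..q} (\<lambda>t. of_real (\<phi> t) / (z - of_real t))"
      by (intro continuous_intros \<phi>) auto
    then show "(\<lambda>t. of_real (\<phi> t) / (z - of_real t)) integrable_on cbox p q"
      by (simp add: integrable_continuous_interval)
  next
    have "continuous_on (ball z0 r \<times> {p..q}) (\<lambda>x. \<phi> (snd x))"
      by (rule continuous_on_compose2 [OF \<phi> continuous_on_snd]) auto
    then have "continuous_on (ball z0 r \<times> {p..q}) (\<lambda>x. - of_real (\<phi> (snd x)) / (fst x - of_real (snd x))^2)"
      using nz by (intro continuous_on_divide continuous_on_minus continuous_on_of_real) (auto intro!: continuous_intros)
    then show "continuous_on (ball z0 r \<times> cbox p q) (\<lambda>(z, t). - of_real (\<phi> t) / (z - of_real t)^2)"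
      unfolding case_prod_beta by simp
  qed (use r in auto)
  moreover have "at z0 within ball z0 r = at z0"
    using r by (intro at_within_open) auto
  ultimately show ?thesis by simp
qed

lemma holomorphic_on_cauchy_integral:
  fixes \<phi> :: "real \<Rightarrow> real" and p q :: real and U :: "complex set"
  assumes \<phi>: "continuous_on {p..q} \<phi>" and U: "open U"
    and off: "\<And>z t. z \<in> U \<Longrightarrow> t \<in> {p..q} \<Longrightarrow> z \<noteq> of_real t"
  shows "(\<lambda>z. integral {p..q} (\<lambda>t. of_real (\<phi> t) / (z - of_real t))) holomorphic_on U"
proof -
  have "(\<lambda>z. integral {p..q} (\<lambda>t. of_real (\<phi> t) / (z - of_real t))) field_differentiable at z0"
    if "z0 \<in> U" for z0
  proof -
    obtain r where r: "0 < r" "ball z0 r \<subseteq> U"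
      using U \<open>z0 \<in> U\<close> open_contains_ball by blast
    have "z - of_real t \<noteq> 0" if "z \<in> ball z0 r" "t \<in> {p..q}" for z t
      using off [of z t] that r by auto
    then show ?thesis
      unfolding field_differentiable_def
      using cauchy_integral_has_field_derivative [OF \<phi> r(1)] by blast
  qed
  then show ?thesis
    by (simp add: holomorphic_on_def field_differentiable_at_within)
qed

lemma edge_a_edge_b:
  fixes \<beta> c :: real
  assumes \<beta>: "\<beta> > 0" and c: "c \<ge> 0"
  shows "0 \<le> edge_a \<beta> c" "edge_a \<beta> c < edge_b \<beta> c" "edge_a \<beta> c * edge_b \<beta> c = c"
proof -
  define r where "r = sqrt (1 + 4 * c / \<beta>)"
  define k where "k = 1 + 2 * c / \<beta>"
  have r: "1 \<le> r" "r^2 = 1 + 4 * c / \<beta>" using \<beta> c by (auto simp: r_def)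
  have k: "0 \<le> k" "k^2 = r^2 + (2 * c / \<beta>)^2"
    using \<beta> c r by (auto simp: k_def power2_eq_square algebra_simps)
  then have "r^2 \<le> k^2" by simp
  with k(1) have "r \<le> k" by (rule power2_le_imp_le [rotated])
  have ea: "edge_a \<beta> c = sqrt (\<beta> / 2) * sqrt (k - r)" and eb: "edge_b \<beta> c = sqrt (\<beta> / 2) * sqrt (k + r)"
    by (simp_all add: edge_a_def edge_b_def k_def r_def)
  show "0 \<le> edge_a \<beta> c" "edge_a \<beta> c < edge_b \<beta> c"
    using \<open>r \<le> k\<close> \<beta> r by (simp_all add: ea eb)
  have "edge_a \<beta> c * edge_b \<beta> c = (sqrt (\<beta> / 2) * sqrt (\<beta> / 2)) * sqrt ((k - r) * (k + r))"
    by (simp add: ea eb real_sqrt_mult mult_ac)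
  also have "sqrt (\<beta> / 2) * sqrt (\<beta> / 2) = \<beta> / 2"
    using \<beta> by simp
  also have "(k - r) * (k + r) = (2 * c / \<beta>)^2"
    using k by (simp add: algebra_simps power2_eq_square)
  finally show "edge_a \<beta> c * edge_b \<beta> c = c"
    using \<beta> c by simp
qed

(* The density of nu in a form that is continuous on all of supp_S: when a = 0 the point t = 0
   lies in the support, and there nu_dens has the junk value 0 (as 1 / 0 = 0). *)
definition nu_rho :: "real \<Rightarrow> real \<Rightarrow> real \<Rightarrow> real" where
  "nu_rho \<beta> c t = 2 / (pi * \<beta>) * sqrt ((1 - (edge_a \<beta> c)^2 / t^2) * ((edge_b \<beta> c)^2 - t^2))"

lemma continuous_on_nu_rho:
  assumes "\<beta> > 0" "c \<ge> 0"
  shows "continuous_on (supp_S \<beta> c) (nu_rho \<beta> c)"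
proof (cases "edge_a \<beta> c = 0")
  case True
  then show ?thesis using assms by (simp add: nu_rho_def [abs_def]) (intro continuous_intros, auto)
next
  case False
  then have "0 < edge_a \<beta> c" using edge_a_edge_b(1) [OF assms] by simp
  then have "\<forall>t \<in> supp_S \<beta> c. t^2 \<noteq> 0" by (auto simp: supp_S_def)
  then show ?thesis unfolding nu_rho_def [abs_def] by (intro continuous_intros) auto
qed

lemma nu_dens_eq_nu_rho:
  assumes "t \<noteq> 0"
  shows "nu_dens \<beta> c t = indicator (supp_S \<beta> c) t * nu_rho \<beta> c t"
  using sqrt_one_minus_div_square [OF assms] by (simp add: nu_dens_def nu_rho_def)

lemma nu_dens_nonneg:
  assumes "\<beta> > 0" "c \<ge> 0"
  shows "0 \<le> nu_dens \<beta> c t"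
proof (cases "t \<in> supp_S \<beta> c")
  case True
  let ?a = "edge_a \<beta> c" and ?b = "edge_b \<beta> c"
  have t: "?a \<le> \<bar>t\<bar>" "\<bar>t\<bar> \<le> ?b" and "0 \<le> ?a"
    using True edge_a_edge_b(1) [OF assms] by (auto simp: supp_S_def)
  then have "?a^2 \<le> t^2" "t^2 \<le> ?b^2"
    using power_mono [OF t(1), of 2] power_mono [OF t(2) abs_ge_zero, of 2] by simp_all
  then have "0 \<le> sqrt ((t^2 - ?a^2) * (?b^2 - t^2))" by simp
  then show ?thesis using True assms unfolding nu_dens_def by (auto intro!: mult_nonneg_nonneg)
qed (simp add: nu_dens_def)

lemma integral_symmetric_intervals_Un:
  fixes f :: "real \<Rightarrow> 'a::banach"
  assumes "0 \<le> a" "f integrable_on {-b..-a}" "f integrable_on {a..b}"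
  shows "integral ({-b..-a} \<union> {a..b}) f = integral {-b..-a} f + integral {a..b} f"
proof (rule integral_Un [OF assms(2,3)])
  show "negligible ({-b..-a} \<inter> {a..b})"
    by (rule negligible_subset [of "{0}"]) (use assms(1) in auto)
qed

lemma integral_reflect_add:
  fixes f :: "real \<Rightarrow> 'a::banach"
  assumes "f integrable_on {a..b}" "(\<lambda>t. f (- t)) integrable_on {a..b}"
  shows "integral {-b..-a} f + integral {a..b} f = integral {a..b} (\<lambda>t. f (- t) + f t)"
  using Henstock_Kurzweil_Integration.integral_reflect_real [of b a "\<lambda>t. f (- t)"] integral_add [OF assms(2,1)]
  by simp

lemma nu_dens_borel_measurable: "nu_dens \<beta> c \<in> borel_measurable borel"
  unfolding nu_dens_def supp_S_def by measurable

lemma continuous_on_nu_rho_kernel: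
  assumes "\<beta> > 0" "c \<ge> 0" and z: "z \<notin> complex_of_real ` supp_S \<beta> c"
  shows "continuous_on (supp_S \<beta> c) (\<lambda>t. of_real (nu_rho \<beta> c t) / (z - of_real t))"
  using continuous_on_nu_rho [OF assms(1,2)] z by (intro continuous_intros) auto

lemma cauchy_G_eq_integral:
  assumes "\<beta> > 0" "c \<ge> 0" and z: "z \<notin> complex_of_real ` supp_S \<beta> c"
  shows "cauchy_G \<beta> c z = integral (supp_S \<beta> c) (\<lambda>t. of_real (nu_rho \<beta> c t) / (z - of_real t))"
proof -
  define k where "k t = of_real (nu_rho \<beta> c t) / (z - of_real t)" for t
  have "continuous_on (supp_S \<beta> c) k"
    unfolding k_def using assms by (rule continuous_on_nu_rho_kernel)
  then have k: "set_integrable lborel (supp_S \<beta> c) k"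
    unfolding set_integrable_def by (intro borel_integrable_compact) (auto simp: supp_S_def)
  have "cauchy_G \<beta> c z = (\<integral>t. nu_dens \<beta> c t *\<^sub>R (1 / (z - of_real t)) \<partial>lborel)"
    unfolding cauchy_G_def nu_def
    by (rule integral_density) (use nu_dens_borel_measurable nu_dens_nonneg assms in auto)
  also have "\<dots> = (\<integral>t. indicator (supp_S \<beta> c) t *\<^sub>R k t \<partial>lborel)"
  proof (rule integral_cong_AE)
    show "AE t in lborel. nu_dens \<beta> c t *\<^sub>R (1 / (z - of_real t)) = indicator (supp_S \<beta> c) t *\<^sub>R k t"
      using AE_lborel_singleton [of 0]
      by eventually_elim (simp add: nu_dens_eq_nu_rho k_def scaleR_conv_of_real)
  qed (use nu_dens_borel_measurable k in \<open>auto simp: set_integrable_def\<close>)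
  also have "\<dots> = integral (supp_S \<beta> c) k"
    using set_borel_integral_eq_integral(2) [OF k] by (simp add: set_lebesgue_integral_def)
  finally show ?thesis unfolding k_def .
qed

lemma cauchy_G_eq_interval_integrals:
  assumes "\<beta> > 0" "c \<ge> 0" and z: "z \<notin> complex_of_real ` supp_S \<beta> c"
  shows "cauchy_G \<beta> c z =
           integral {- edge_b \<beta> c..- edge_a \<beta> c} (\<lambda>t. of_real (nu_rho \<beta> c t) / (z - of_real t))
         + integral {edge_a \<beta> c..edge_b \<beta> c} (\<lambda>t. of_real (nu_rho \<beta> c t) / (z - of_real t))"
proof -
  let ?k = "\<lambda>t. of_real (nu_rho \<beta> c t) / (z - of_real t)"
  have "?k integrable_on {p..q}" if "{p..q} \<subseteq> supp_S \<beta> c" for p q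
    using continuous_on_subset [OF continuous_on_nu_rho_kernel [OF assms] that]
    by (simp add: integrable_continuous_interval)
  then have "?k integrable_on {- edge_b \<beta> c..- edge_a \<beta> c}" "?k integrable_on {edge_a \<beta> c..edge_b \<beta> c}"
    by (auto simp: supp_S_def)
  from integral_symmetric_intervals_Un [OF edge_a_edge_b(1) [OF assms(1,2)] this]
  show ?thesis
    using cauchy_G_eq_integral [OF assms] by (simp add: supp_S_def)
qed

lemma cauchy_G_holomorphic:
  assumes "\<beta> > 0" "c \<ge> 0"
  shows "cauchy_G \<beta> c holomorphic_on - (complex_of_real ` supp_S \<beta> c)"
proof (rule holomorphic_transform [OF _ cauchy_G_eq_interval_integrals [OF assms, symmetric]])
  have "compact (complex_of_real ` supp_S \<beta> c)"
    by (intro compact_continuous_image continuous_intros) (simp add: supp_S_def compact_Un)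
  then have "open (- (complex_of_real ` supp_S \<beta> c))"
    by (simp add: open_Compl compact_imp_closed)
  moreover have "continuous_on I (nu_rho \<beta> c)" if "I \<subseteq> supp_S \<beta> c" for I
    using continuous_on_subset [OF continuous_on_nu_rho [OF assms] that] .
  ultimately show "(\<lambda>z. integral {- edge_b \<beta> c..- edge_a \<beta> c} (\<lambda>t. of_real (nu_rho \<beta> c t) / (z - of_real t))
      + integral {edge_a \<beta> c..edge_b \<beta> c} (\<lambda>t. of_real (nu_rho \<beta> c t) / (z - of_real t)))
      holomorphic_on - (complex_of_real ` supp_S \<beta> c)"
    by (intro holomorphic_on_add holomorphic_on_cauchy_integral) (auto simp: supp_S_def)
qed auto

lemma f_branch_holomorphic:
  assumes "\<beta> > 0" "c \<ge> 0"
  shows "f_branch \<beta> c holomorphic_on - (complex_of_real ` {..edge_b \<beta> c})"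
proof -
  let ?a = "edge_a \<beta> c" and ?b = "edge_b \<beta> c"
  have off_slot: "z - of_real r \<notin> \<real>\<^sub>\<le>\<^sub>0" if "z \<in> - (complex_of_real ` {..?b})" "r \<le> ?b" for z r
    using that by (auto simp: complex_slot_left_eq complex_nonpos_Reals_iff)
  have "0 \<le> ?a" "?a < ?b" using edge_a_edge_b [OF assms] by auto
  then have "z \<noteq> 0" "z - of_real ?a \<notin> \<real>\<^sub>\<le>\<^sub>0" "z - of_real ?b \<notin> \<real>\<^sub>\<le>\<^sub>0"
      "z + of_real ?a \<notin> \<real>\<^sub>\<le>\<^sub>0" "z + of_real ?b \<notin> \<real>\<^sub>\<le>\<^sub>0"
    if "z \<in> - (complex_of_real ` {..?b})" for z
    using that off_slot [OF that, of ?a] off_slot [OF that, of ?b] off_slot [OF that, of "- ?a"]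
      off_slot [OF that, of "- ?b"]
    by (auto simp: complex_slot_left_eq)
  then show ?thesis
    unfolding f_branch_def [abs_def] using assms by (intro holomorphic_intros) auto
qed

lemma f_branch_of_real:
  assumes "\<beta> > 0" "c \<ge> 0" and x: "edge_b \<beta> c < x"
  shows "f_branch \<beta> c (of_real x)
           = of_real (2 / (\<beta> * x) * sqrt ((x^2 - (edge_a \<beta> c)^2) * (x^2 - (edge_b \<beta> c)^2)))"
proof -
  let ?a = "edge_a \<beta> c" and ?b = "edge_b \<beta> c"
  have "0 \<le> ?a" "?a < ?b" using edge_a_edge_b [OF assms(1,2)] by auto
  then have "f_branch \<beta> c (of_real x)
      = of_real (2 / (\<beta> * x) * (sqrt (x - ?a) * sqrt (x - ?b) * sqrt (x + ?a) * sqrt (x + ?b)))"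
    unfolding f_branch_def using x by (simp add: csqrt_of_real mult.assoc flip: of_real_diff of_real_add)
  also have "sqrt (x - ?a) * sqrt (x - ?b) * sqrt (x + ?a) * sqrt (x + ?b)
      = sqrt ((x^2 - ?a^2) * (x^2 - ?b^2))"
    by (simp add: real_sqrt_mult [symmetric] power2_eq_square algebra_simps)
  finally show ?thesis .
qed

lemma cauchy_G_of_real_folded:
  assumes "\<beta> > 0" "c \<ge> 0" and x: "edge_b \<beta> c < x"
  shows "cauchy_G \<beta> c (of_real x)
           = integral {edge_a \<beta> c..edge_b \<beta> c} (\<lambda>t. of_real (nu_rho \<beta> c t * (2 * x / (x^2 - t^2))))"
proof -
  define a where "a = edge_a \<beta> c"
  define b where "b = edge_b \<beta> c"
  define k :: "real \<Rightarrow> complex" where "k t = of_real (nu_rho \<beta> c t) / (of_real x - of_real t)" for t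
  have a: "0 \<le> a" "a < b" and bx: "b < x"
    using edge_a_edge_b [OF assms(1,2)] x by (auto simp: a_def b_def)
  have "of_real x \<notin> complex_of_real ` supp_S \<beta> c"
    using a bx by (auto simp: supp_S_def a_def b_def)
  from continuous_on_nu_rho_kernel [OF assms(1,2) this]
  have k: "continuous_on ({-b..-a} \<union> {a..b}) k"
    by (simp add: k_def supp_S_def a_def b_def)
  have "cauchy_G \<beta> c (of_real x) = integral {-b..-a} k + integral {a..b} k"
    using cauchy_G_eq_interval_integrals [OF assms(1,2) \<open>of_real x \<notin> _\<close>] by (simp add: k_def [abs_def] a_def b_def)
  also have "\<dots> = integral {a..b} (\<lambda>t. k (- t) + k t)"
  proof (rule integral_reflect_add)
    show "k integrable_on {a..b}"
      by (rule integrable_continuous_interval, rule continuous_on_subset [OF k]) auto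
    show "(\<lambda>t. k (- t)) integrable_on {a..b}"
      by (rule integrable_continuous_interval, rule continuous_on_compose2 [OF k]) (auto intro!: continuous_intros)
  qed
  also have "\<dots> = integral {a..b} (\<lambda>t. of_real (nu_rho \<beta> c t * (2 * x / (x^2 - t^2))))"
  proof (rule integral_cong)
    fix t assume "t \<in> {a..b}"
    then have "x - t \<noteq> 0" "x + t \<noteq> 0" using a bx by auto
    have "k (- t) + k t = of_real (nu_rho \<beta> c t / (x + t) + nu_rho \<beta> c t / (x - t))"
      by (simp add: k_def nu_rho_def add.commute)
    also have "nu_rho \<beta> c t / (x + t) + nu_rho \<beta> c t / (x - t) = nu_rho \<beta> c t * (2 * x / (x^2 - t^2))"
      using \<open>x - t \<noteq> 0\<close> \<open>x + t \<noteq> 0\<close> by (simp add: field_simps power2_eq_square)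
    finally show "k (- t) + k t = of_real (nu_rho \<beta> c t * (2 * x / (x^2 - t^2)))" .
  qed
  finally show ?thesis by (simp add: a_def b_def)
qed

lemma cauchy_G_of_real:
  assumes "\<beta> > 0" "c \<ge> 0" and x: "edge_b \<beta> c < x"
  shows "cauchy_G \<beta> c (of_real x) = 2 / of_real \<beta> * of_real x - 2 * of_real c / (of_real \<beta> * of_real x)
           - f_branch \<beta> c (of_real x)"
proof -
  define a where "a = edge_a \<beta> c"
  define b where "b = edge_b \<beta> c"
  define s where "s = sqrt ((x^2 - a^2) * (x^2 - b^2))"
  have a: "0 \<le> a" "a < b" "a * b = c" and bx: "b < x"
    using edge_a_edge_b [OF assms(1,2)] x by (auto simp: a_def b_def)
  have "((\<lambda>t. nu_rho \<beta> c t * (2 * x / (x^2 - t^2))) has_integral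
      2 / (pi * \<beta>) * (x * pi * (1 - a * b / x^2 - s / x^2))) {a..b}"
    using has_integral_mult_right [OF has_integral_folded_kernel [OF a(1,2) bx], of "2 / (pi * \<beta>)"]
    by (simp add: nu_rho_def a_def b_def s_def mult.assoc)
  then have "cauchy_G \<beta> c (of_real x) = of_real (2 / (pi * \<beta>) * (x * pi * (1 - a * b / x^2 - s / x^2)))"
    unfolding cauchy_G_of_real_folded [OF assms] a_def [symmetric] b_def [symmetric]
    by (intro integral_unique has_integral_of_real)
  also have "\<dots> = of_real (2 / \<beta> * x - 2 * c / (\<beta> * x) - 2 / (\<beta> * x) * s)"
  proof -
    have "x \<noteq> 0" using a bx by linarith
    then show ?thesis using assms by (simp add: field_simps power2_eq_square flip: a(3))
  qed
  finally show ?thesis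
    using f_branch_of_real [OF assms] by (simp add: a_def b_def s_def)
qed

lemma of_real_islimpt_ray:
  assumes "b < x"
  shows "complex_of_real x islimpt complex_of_real ` {b<..}"
  unfolding islimpt_approachable
proof (intro allI impI)
  fix e :: real assume "0 < e"
  have "of_real (x + e / 2) \<in> complex_of_real ` {b<..}"
    using assms \<open>0 < e\<close> by (intro imageI) auto
  moreover have "of_real (x + e / 2) \<noteq> complex_of_real x" "dist (complex_of_real (x + e / 2)) (of_real x) < e"
    using \<open>0 < e\<close> by (auto simp: dist_norm simp flip: of_real_diff)
  ultimately show "\<exists>y \<in> complex_of_real ` {b<..}. y \<noteq> of_real x \<and> dist y (of_real x) < e"
    by blast
qed

lemma slit_plane_subset_off_support:
  assumes "\<beta> > 0" "c \<ge> 0"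
  shows "- (complex_of_real ` {..edge_b \<beta> c}) \<subseteq> - (complex_of_real ` supp_S \<beta> c \<union> {0})"
  using edge_a_edge_b [OF assms] by (auto simp: supp_S_def)

lemma cauchy_G_on_slit_plane:
  assumes "\<beta> > 0" "c \<ge> 0" and z: "z \<in> - (complex_of_real ` {..edge_b \<beta> c})"
  shows "cauchy_G \<beta> c z = 2 / of_real \<beta> * z - 2 * of_real c / (of_real \<beta> * z) - f_branch \<beta> c z"
proof -
  let ?slit = "- (complex_of_real ` {..edge_b \<beta> c})"
  define h where "h z = cauchy_G \<beta> c z - (2 / of_real \<beta> * z - 2 * of_real c / (of_real \<beta> * z) - f_branch \<beta> c z)"
    for z
  have "h z = 0"
  proof (rule analytic_continuation [where f = h and S = ?slit and U = "complex_of_real ` {edge_b \<beta> c<..}"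
        and \<xi> = "of_real (edge_b \<beta> c + 1)"])
    have "cauchy_G \<beta> c holomorphic_on ?slit" "\<forall>z \<in> ?slit. z \<noteq> 0"
      using holomorphic_on_subset [OF cauchy_G_holomorphic [OF assms(1,2)]] slit_plane_subset_off_support [OF assms(1,2)]
      by auto
    then show "h holomorphic_on ?slit"
      unfolding h_def [abs_def] using f_branch_holomorphic [OF assms(1,2)] assms(1)
      by (intro holomorphic_intros) auto
    show "open ?slit"
      by (simp add: closed_slot_left open_Compl)
    show "connected ?slit"
      by (intro starlike_imp_connected starlike_slotted_complex_plane_left)
    show "of_real (edge_b \<beta> c + 1) islimpt complex_of_real ` {edge_b \<beta> c<..}"
      by (rule of_real_islimpt_ray) simp
    show "h w = 0" if "w \<in> complex_of_real ` {edge_b \<beta> c<..}" for w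
      using that cauchy_G_of_real [OF assms(1,2)] by (auto simp: h_def)
  qed (use z in \<open>auto simp: complex_slot_left_eq\<close>)
  then show ?thesis by (simp add: h_def)
qed

theorem proposition4p4:
  fixes \<beta> c :: real
  assumes "\<beta> > 0" and "c \<ge> 0"
  shows "\<exists>g. g holomorphic_on (- (complex_of_real ` supp_S \<beta> c \<union> {0})) \<and>
             (\<forall>z \<in> - (complex_of_real ` {..edge_b \<beta> c}). g z = f_branch \<beta> c z) \<and>
             (\<forall>z \<in> - (complex_of_real ` supp_S \<beta> c \<union> {0}).
                cauchy_G \<beta> c z = - g z + 2 / complex_of_real \<beta> * z
                                  - 2 * complex_of_real c / (complex_of_real \<beta> * z))"
proof -
  define g where "g z = - cauchy_G \<beta> c z + 2 / complex_of_real \<beta> * z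
                          - 2 * complex_of_real c / (complex_of_real \<beta> * z)" for z
  have "g holomorphic_on - (complex_of_real ` supp_S \<beta> c \<union> {0})"
    unfolding g_def [abs_def] using assms
    by (intro holomorphic_intros holomorphic_on_subset [OF cauchy_G_holomorphic [OF assms]]) auto
  moreover have "g z = f_branch \<beta> c z" if "z \<in> - (complex_of_real ` {..edge_b \<beta> c})" for z
    using cauchy_G_on_slit_plane [OF assms that] by (simp add: g_def)
  ultimately show ?thesis
    by (intro exI [of _ g]) (auto simp: g_def)
qed

end
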